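(* Let $D_{2n}$ be the set of all Dyck words of length $2n$. Then $\mathrm{rpn}(D_{2n}) \geq n^{\Omega(\log n)}$.
   Context: The set $D\subseteq\{0,1\}^*$ of Dyck words is the smallest set with $\epsilon\in D$ and such that $v,w\in D$ implies $vw\in D$ and $0w1\in D$ (equivalently: words with equally many zeros and ones in which every prefix contains no more ones than zeros). $D_{2n}=D\cap\{0,1\}^{2n}$. Regular expressions are built from $\epsilon$ and letters by union and concatenation (no $\emptyset$); $\mathrm{rpn}(L)$ is the minimum number of syntax-tree nodes of an expression describing $L$. *)

theory Defs
  imports Complex_Main
begin

text \<open>Words over the alphabet {0,1} are boolean lists: False is the letter 0, True is the letter 1.\<close>

inductive_set dyck :: "bool list set" where
  eps: "[] \<in> dyck"
| conc: "v \<in> dyck \<Longrightarrow> w \<in> dyck \<Longrightarrow> v @ w \<in> dyck"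
| wrap: "w \<in> dyck \<Longrightarrow> [False] @ w @ [True] \<in> dyck"

definition dyck_len :: "nat \<Rightarrow> bool list set" where
  "dyck_len m = {w \<in> dyck. length w = m}"

datatype rexp = Eps | Sym bool | Alt rexp rexp | Cat rexp rexp

fun lang :: "rexp \<Rightarrow> bool list set" where
  "lang Eps = {[]}"
| "lang (Sym a) = {[a]}"
| "lang (Alt r s) = lang r \<union> lang s"
| "lang (Cat r s) = {u @ v | u v. u \<in> lang r \<and> v \<in> lang s}"

fun rnodes :: "rexp \<Rightarrow> nat" where
  "rnodes Eps = 1"
| "rnodes (Sym a) = 1"
| "rnodes (Alt r s) = 1 + rnodes r + rnodes s"
| "rnodes (Cat r s) = 1 + rnodes r + rnodes s"

definition rpn :: "bool list set \<Rightarrow> nat" where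
  "rpn L = (LEAST k. \<exists>r. lang r = L \<and> rnodes r = k)"

end

theory Submission
  imports Defs
begin

(*
  A regular expression r for a set of words of length l is homogeneous: each subexpression
  describes words of a single length. Cutting its syntax tree at length l/2 yields pieces G
  of lengths in (l/4, l/2] and total size at most that of r, such that every word of L(r)
  has a factor from some L(G) at a position determined by G. If all words of L(r) contain
  k ones, a word with a prescribed factor is determined by the factor and by the remaining
  m >= l/2 letters, which form one of at most 2^m / sqrt m words with a fixed number of
  ones. By induction on l this gives |L(r)| * exp((ln l)^2 / 16) = O(size(r) * 2^l).
  The cycle lemma gives at least 4^n / (4n^2) Dyck words of length 2n, hence
  rpn(D_2n) >= n^Omega(log n).
*)

section \<open>Slices of the Boolean cube\<close>

abbreviation ones :: "bool list \<Rightarrow> nat" where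
  "ones w \<equiv> count_list w True"

definition slice :: "nat \<Rightarrow> nat \<Rightarrow> bool list set" where
  "slice m j = {w. length w = m \<and> ones w = j}"

lemma finite_slice [simp]: "finite (slice m j)"
proof (rule finite_subset)
  show "slice m j \<subseteq> {w. set w \<subseteq> UNIV \<and> length w = m}" by (auto simp: slice_def)
qed (rule finite_lists_length_eq, simp)

lemma slice_0: "slice 0 j = (if j = 0 then {[]} else {})"
  by (auto simp: slice_def)

lemma slice_Suc:
  "slice (Suc m) j = Cons False ` slice m j \<union> (if j = 0 then {} else Cons True ` slice m (j - 1))"
proof -
  have "w \<in> slice (Suc m) j \<longleftrightarrow> (\<exists>u \<in> slice m j. w = False # u)
          \<or> (j \<noteq> 0 \<and> (\<exists>u \<in> slice m (j - 1). w = True # u))" for w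
    by (cases w) (auto simp: slice_def)
  then show ?thesis by auto
qed

lemma card_slice: "card (slice m j) = m choose j"
proof (induction m arbitrary: j)
  case 0
  then show ?case by (simp add: slice_0)
next
  case (Suc m)
  show ?case
  proof (cases j)
    case 0
    then show ?thesis using Suc.IH by (simp add: slice_Suc card_image)
  next
    case (Suc i)
    then have "slice (Suc m) j = Cons False ` slice m j \<union> Cons True ` slice m i"
      by (simp add: slice_Suc)
    then have "card (slice (Suc m) j) = card (Cons False ` slice m j) + card (Cons True ` slice m i)"
      using card_Un_disjoint[of "Cons False ` slice m j" "Cons True ` slice m i"] by auto
    then show ?thesis using Suc.IH \<open>j = Suc i\<close> by (simp add: card_image)
  qed
qed

lemma central_binomial_Suc: "(2 * Suc k) choose Suc k = 2 * ((2 * k + 1) choose k)"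
  using binomial_symmetric[of k "2 * k + 1"] by simp

lemma odd_binomial_middle: "((2 * k + 1) choose k) * (k + 1) = (2 * k + 1) * ((2 * k) choose k)"
  using Suc_times_binomial_eq[of "2 * k" k] binomial_symmetric[of k "2 * k + 1"] by simp

(* The factor 3 * k + 1 rather than k is what makes the induction go through. *)
lemma central_binomial_sq_le: "((2 * k) choose k)^2 * (3 * k + 1) \<le> 16^k"
proof (induction k)
  case 0
  then show ?case by simp
next
  case (Suc k)
  define C where "C = (2 * k) choose k"
  define X where "X = ((2 * Suc k) choose Suc k)^2 * (3 * Suc k + 1)"
  have "X * (k + 1)^2
          = 4 * (3 * k + 4) * (((2 * k + 1) choose k) * (k + 1))^2"
    unfolding X_def central_binomial_Suc by (simp add: power2_eq_square algebra_simps)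
  also have "\<dots> = 4 * ((2 * k + 1)^2 * (3 * k + 4)) * C^2"
    unfolding odd_binomial_middle C_def by (simp add: power2_eq_square algebra_simps)
  also have "\<dots> \<le> 4 * (4 * (k + 1)^2 * (3 * k + 1)) * C^2"
    by (intro mult_le_mono1 mult_le_mono2) (simp add: power2_eq_square algebra_simps)
  also have "\<dots> = 16 * (k + 1)^2 * (C^2 * (3 * k + 1))"
    by (simp add: algebra_simps)
  also have "\<dots> \<le> 16 * (k + 1)^2 * 16^k"
    using Suc.IH unfolding C_def by (rule mult_le_mono2)
  finally have "X * (k + 1)^2 \<le> 16^Suc k * (k + 1)^2"
    by (simp add: ac_simps)
  then show ?case
    unfolding X_def by simp
qed

lemma binomial_sq_le: "(m choose j)^2 * m \<le> 4^m"
proof (cases "even m")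
  case True
  then obtain k where m: "m = 2 * k" by blast
  have "(m choose j)^2 * m \<le> ((2 * k) choose k)^2 * (3 * k + 1)"
    using binomial_maximum[of m j] m by (intro mult_le_mono power_mono) auto
  also have "\<dots> \<le> 4^m"
    using central_binomial_sq_le[of k] by (simp add: m power_mult)
  finally show ?thesis .
next
  case False
  then obtain k where m: "m = 2 * k + 1" using oddE by blast
  have "(m choose j)^2 * m \<le> ((2 * k + 1) choose k)^2 * (3 * k + 4)"
    using binomial_maximum[of m j] m by (intro mult_le_mono power_mono) auto
  also have "\<dots> \<le> 4^m"
  proof -
    have "4 * (((2 * k + 1) choose k)^2 * (3 * k + 4)) \<le> 16^Suc k"
      using central_binomial_sq_le[of "Suc k"] unfolding central_binomial_Suc
      by (simp add: power_mult_distrib ac_simps)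
    also have "(16::nat)^Suc k = 4 * 4^m"
      by (simp add: m power_add power_mult)
    finally show ?thesis by simp
  qed
  finally show ?thesis .
qed

lemma binomial_sqrt_le: "real (m choose j) * sqrt (real m) \<le> 2^m"
proof (rule power2_le_imp_le)
  have "(real (m choose j) * sqrt (real m))^2 = real ((m choose j)^2 * m)"
    by (simp add: power_mult_distrib)
  also have "\<dots> \<le> 4^m"
    using binomial_sq_le by (metis of_nat_le_iff of_nat_numeral of_nat_power)
  also have "(4::real)^m = (2^m)^2"
    by (simp add: power2_eq_square flip: power_mult_distrib)
  finally show "(real (m choose j) * sqrt (real m))^2 \<le> (2^m)^2" .
qed simp

section \<open>Homogeneous expressions and their pieces\<close>

fun rlen :: "rexp \<Rightarrow> nat" where
  "rlen Eps = 0"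
| "rlen (Sym a) = 1"
| "rlen (Alt r s) = rlen r"
| "rlen (Cat r s) = rlen r + rlen s"

fun homogeneous :: "rexp \<Rightarrow> bool" where
  "homogeneous (Alt r s) \<longleftrightarrow> homogeneous r \<and> homogeneous s \<and> rlen r = rlen s"
| "homogeneous (Cat r s) \<longleftrightarrow> homogeneous r \<and> homogeneous s"
| "homogeneous _ \<longleftrightarrow> True"

lemma lang_nonempty: "lang r \<noteq> {}"
  by (induction r) auto

lemma length_lang_homogeneous: "homogeneous r \<Longrightarrow> w \<in> lang r \<Longrightarrow> length w = rlen r"
  by (induction r arbitrary: w) auto

lemma append_in_lang_Cat: "u \<in> lang r \<Longrightarrow> v \<in> lang s \<Longrightarrow> u @ v \<in> lang (Cat r s)"
  by auto

lemma homogeneous_if_lengths_eq: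
  "(\<forall>w\<in>lang r. length w = m) \<Longrightarrow> homogeneous r \<and> rlen r = m"
proof (induction r arbitrary: m)
  case (Alt r s)
  then show ?case by auto
next
  case (Cat r s)
  obtain u v where u: "u \<in> lang r" and v: "v \<in> lang s" using lang_nonempty by blast
  have len: "length (u' @ v') = m" if "u' \<in> lang r" "v' \<in> lang s" for u' v'
    using Cat.prems that append_in_lang_Cat by blast
  have "\<forall>u'\<in>lang r. length u' = m - length v" using len[OF _ v] by force
  then have "homogeneous r \<and> rlen r = m - length v" by (rule Cat.IH(1))
  moreover have "\<forall>v'\<in>lang s. length v' = m - length u" using len[OF u] by force
  then have "homogeneous s \<and> rlen s = m - length u" by (rule Cat.IH(2))
  ultimately show ?case using len[OF u v] by auto
qed auto

definition in_context :: "rexp \<Rightarrow> rexp \<Rightarrow> bool" where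
  "in_context G r \<longleftrightarrow> (\<exists>x y. \<forall>v\<in>lang G. x @ v @ y \<in> lang r)"

lemma in_context_refl: "in_context r r"
  unfolding in_context_def by (intro exI[of _ "[]"]) simp

lemma in_context_AltI: "in_context G a \<or> in_context G b \<Longrightarrow> in_context G (Alt a b)"
  unfolding in_context_def by auto

lemma in_context_CatI: "in_context G a \<or> in_context G b \<Longrightarrow> in_context G (Cat a b)"
proof -
  obtain u v where u: "u \<in> lang a" and v: "v \<in> lang b" using lang_nonempty by blast
  assume "in_context G a \<or> in_context G b"
  then show ?thesis
  proof
    assume "in_context G a"
    then obtain x y where "\<forall>w\<in>lang G. x @ w @ y \<in> lang a" unfolding in_context_def by blast
    then have "\<forall>w\<in>lang G. x @ w @ (y @ v) \<in> lang (Cat a b)"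
      using append_in_lang_Cat[OF _ v] by (metis append.assoc)
    then show ?thesis unfolding in_context_def by blast
  next
    assume "in_context G b"
    then obtain x y where "\<forall>w\<in>lang G. x @ w @ y \<in> lang b" unfolding in_context_def by blast
    then have "\<forall>w\<in>lang G. (u @ x) @ w @ y \<in> lang (Cat a b)"
      using append_in_lang_Cat[OF u] by simp
    then show ?thesis unfolding in_context_def by blast
  qed
qed

(*
  Each piece G comes with the offset p at which its words occur inside the words of r.
  A long concatenation is only explored in its longer factor; this keeps every piece
  longer than t/2.
*)
fun pieces :: "nat \<Rightarrow> rexp \<Rightarrow> (rexp \<times> nat) list" where
  "pieces t (Alt a b) =
     (if rlen (Alt a b) \<le> t then [(Alt a b, 0)] else pieces t a @ pieces t b)"
| "pieces t (Cat a b) =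
     (if rlen (Cat a b) \<le> t then [(Cat a b, 0)]
      else if rlen b \<le> rlen a then pieces t a
      else map (\<lambda>(G, p). (G, p + rlen a)) (pieces t b))"
| "pieces t r = [(r, 0)]"

lemma pieces_short: "rlen r \<le> t \<Longrightarrow> pieces t r = [(r, 0)]"
  by (cases r) auto

lemma mem_set_shift:
  "(G, p) \<in> set (map (\<lambda>(G, p). (G, p + n)) ps) \<longleftrightarrow> (\<exists>q. (G, q) \<in> set ps \<and> p = q + n)"
  by auto

lemma pieces_homogeneous:
  "(G, p) \<in> set (pieces t r) \<Longrightarrow> homogeneous r \<Longrightarrow> homogeneous G \<and> p + rlen G \<le> rlen r"
  by (induction t r arbitrary: G p rule: pieces.induct) (fastforce split: if_splits)+

lemma pieces_rlen_le: "(G, p) \<in> set (pieces t r) \<Longrightarrow> 0 < t \<Longrightarrow> rlen G \<le> t"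
proof (induction t r arbitrary: G p rule: pieces.induct)
  case (1 t a b)
  show ?case
  proof (cases "rlen (Alt a b) \<le> t")
    case True
    with "1.prems" show ?thesis by simp
  next
    case False
    with "1.prems"(1) have "(G, p) \<in> set (pieces t a) \<or> (G, p) \<in> set (pieces t b)" by simp
    with "1.IH"[OF False] "1.prems"(2) show ?thesis by blast
  qed
next
  case (2 t a b)
  consider "rlen (Cat a b) \<le> t" | "\<not> rlen (Cat a b) \<le> t" "rlen b \<le> rlen a"
    | "\<not> rlen (Cat a b) \<le> t" "\<not> rlen b \<le> rlen a" by blast
  then show ?case
  proof cases
    case 1
    with "2.prems" show ?thesis by simp
  next
    case 2
    with "2.prems" "2.IH"(1) show ?thesis by simp
  next
    case 3
    with "2.prems"(1) obtain q where "(G, q) \<in> set (pieces t b)"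
      by (auto simp: mem_set_shift)
    with "2.IH"(2) 3 "2.prems"(2) show ?thesis by blast
  qed
qed auto

lemma pieces_rlen_gt:
  "(G, p) \<in> set (pieces t r) \<Longrightarrow> homogeneous r \<Longrightarrow> t < rlen r \<Longrightarrow> t < 2 * rlen G"
proof (induction t r arbitrary: G p rule: pieces.induct)
  case (2 t a b)
  then show ?case using pieces_short[of a t] pieces_short[of b t] by (fastforce split: if_splits)
qed (auto split: if_splits)

lemma sum_rnodes_pieces_le: "(\<Sum>x\<leftarrow>pieces t r. rnodes (fst x)) \<le> rnodes r"
  by (induction t r rule: pieces.induct) (auto simp: case_prod_beta comp_def)

lemma pieces_in_context: "(G, p) \<in> set (pieces t r) \<Longrightarrow> in_context G r"
proof (induction t r arbitrary: G p rule: pieces.induct)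
  case (1 t a b)
  then show ?case
    by (cases "rlen (Alt a b) \<le> t") (auto intro: in_context_refl in_context_AltI)
next
  case (2 t a b)
  then show ?case
    by (cases "rlen (Cat a b) \<le> t"; cases "rlen b \<le> rlen a")
      (auto simp: mem_set_shift intro: in_context_refl in_context_CatI)
qed (auto intro: in_context_refl)

lemma pieces_cover:
  "homogeneous r \<Longrightarrow> w \<in> lang r \<Longrightarrow> \<exists>(G, p)\<in>set (pieces t r). take (rlen G) (drop p w) \<in> lang G"
proof (induction t r arbitrary: w rule: pieces.induct)
  case (1 t a b)
  show ?case
  proof (cases "rlen (Alt a b) \<le> t")
    case True
    then show ?thesis using "1.prems" length_lang_homogeneous[of "Alt a b" w] by auto
  next
    case False
    from "1.prems" have "w \<in> lang a \<or> w \<in> lang b" by simp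
    then show ?thesis using "1.IH"[OF False] "1.prems"(1) False by fastforce
  qed
next
  case (2 t a b)
  from "2.prems" obtain u v where w: "w = u @ v" and u: "u \<in> lang a" and v: "v \<in> lang b"
    by auto
  have lu: "length u = rlen a" using "2.prems"(1) u length_lang_homogeneous by simp
  consider "rlen (Cat a b) \<le> t" | "\<not> rlen (Cat a b) \<le> t" "rlen b \<le> rlen a"
    | "\<not> rlen (Cat a b) \<le> t" "\<not> rlen b \<le> rlen a" by blast
  then show ?case
  proof cases
    case 1
    then show ?thesis using "2.prems" length_lang_homogeneous[of "Cat a b" w] by auto
  next
    case 2
    with "2.IH"(1) "2.prems"(1) u obtain G p where
      Gp: "(G, p) \<in> set (pieces t a)" "take (rlen G) (drop p u) \<in> lang G" by fastforce
    have "p + rlen G \<le> length u" using pieces_homogeneous[OF Gp(1)] "2.prems"(1) lu by simp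
    then show ?thesis using 2 Gp w by force
  next
    case 3
    with "2.IH"(2) "2.prems"(1) v obtain G p where
      Gp: "(G, p) \<in> set (pieces t b)" "take (rlen G) (drop p v) \<in> lang G" by fastforce
    have "drop (p + rlen a) w = drop p v" using w lu by simp
    then show ?thesis using 3 Gp by force
  qed
qed auto

section \<open>The counting bound\<close>

lemma take_drop_split:
  "p + g \<le> length w \<Longrightarrow> take p w @ take g (drop p w) @ drop (p + g) w = w"
  by (metis append_take_drop_id drop_drop add.commute)

lemma eq_if_excise_eq:
  assumes l: "p + g \<le> length w1" "p + g \<le> length w2"
    and mid: "take g (drop p w1) = take g (drop p w2)"
    and rest: "take p w1 @ drop (p + g) w1 = take p w2 @ drop (p + g) w2"
  shows "w1 = w2"
proof -
  have "length (take p w1) = length (take p w2)" using l by simp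
  then have "take p w1 = take p w2" "drop (p + g) w1 = drop (p + g) w2"
    using rest by simp_all
  then have "take p w1 @ take g (drop p w1) @ drop (p + g) w1
           = take p w2 @ take g (drop p w2) @ drop (p + g) w2"
    using mid by simp
  then show ?thesis
    unfolding take_drop_split[OF l(1)] take_drop_split[OF l(2)] .
qed

lemma card_slice_factor_le:
  assumes A: "A \<subseteq> slice g a" and pg: "p + g \<le> l"
  shows "card {w \<in> slice l k. take g (drop p w) \<in> A} \<le> card A * ((l - g) choose (k - a))"
proof -
  let ?C = "{w \<in> slice l k. take g (drop p w) \<in> A}"
  define excise where "excise w = (take g (drop p w), take p w @ drop (p + g) w)" for w :: "bool list"
  have "excise ` ?C \<subseteq> A \<times> slice (l - g) (k - a)"
  proof
    fix z assume "z \<in> excise ` ?C"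
    then obtain w where w: "w \<in> slice l k" "take g (drop p w) \<in> A" and z: "z = excise w"
      by blast
    have "ones (take p w) + ones (take g (drop p w)) + ones (drop (p + g) w) = k"
      using take_drop_split[of p g w] w(1) pg unfolding slice_def
      by (metis (mono_tags, lifting) count_list_append mem_Collect_eq add.assoc)
    moreover have "ones (take g (drop p w)) = a" using w(2) A by (auto simp: slice_def)
    ultimately show "z \<in> A \<times> slice (l - g) (k - a)"
      using w pg z by (simp add: slice_def excise_def)
  qed
  moreover have "inj_on excise ?C"
  proof (rule inj_onI)
    fix w1 w2 assume "w1 \<in> ?C" "w2 \<in> ?C" and eq: "excise w1 = excise w2"
    then have "p + g \<le> length w1" "p + g \<le> length w2"
      using pg by (simp_all add: slice_def)
    moreover have "take g (drop p w1) = take g (drop p w2)"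
      "take p w1 @ drop (p + g) w1 = take p w2 @ drop (p + g) w2"
      using eq by (simp_all add: excise_def)
    ultimately show "w1 = w2" by (rule eq_if_excise_eq)
  qed
  moreover have "finite A" using A by (rule finite_subset) simp
  ultimately have "card ?C \<le> card (A \<times> slice (l - g) (k - a))"
    by (intro card_inj_on_le) auto
  then show ?thesis by (simp add: card_cartesian_product card_slice)
qed

lemma of_nat_sum_list_map: "of_nat (\<Sum>x\<leftarrow>xs. f x) = (\<Sum>x\<leftarrow>xs. of_nat (f x))"
  by (induction xs) simp_all

lemma card_UN_set_le_sum_list: "card (\<Union>x\<in>set xs. F x) \<le> (\<Sum>x\<leftarrow>xs. card (F x))"
  by (induction xs) (auto intro: card_Un_le order_trans)

lemma weighted_union_bound:
  fixes c d :: real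
  assumes cover: "L \<subseteq> (\<Union>x\<in>set xs. F x)" and fin: "\<And>x. finite (F x)" and "0 \<le> c"
    and bound: "\<And>x. x \<in> set xs \<Longrightarrow> real (card (F x)) * c \<le> real (h x) * d"
  shows "real (card L) * c \<le> real (\<Sum>x\<leftarrow>xs. h x) * d"
proof -
  have "card L \<le> (\<Sum>x\<leftarrow>xs. card (F x))"
    using cover fin by (intro order.trans[OF card_mono card_UN_set_le_sum_list]) auto
  then have "real (card L) \<le> (\<Sum>x\<leftarrow>xs. real (card (F x)))"
    unfolding of_nat_sum_list_map[symmetric] by (rule of_nat_mono)
  then have "real (card L) * c \<le> (\<Sum>x\<leftarrow>xs. real (card (F x)) * c)"
    using \<open>0 \<le> c\<close> by (simp add: sum_list_mult_const mult_right_mono)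
  also have "\<dots> \<le> (\<Sum>x\<leftarrow>xs. real (h x) * d)"
    using bound by (rule sum_list_mono)
  also have "\<dots> = real (\<Sum>x\<leftarrow>xs. h x) * d"
    by (simp add: sum_list_mult_const of_nat_sum_list_map)
  finally show ?thesis .
qed

(* Normalised so that gain l <= 1 for l < 8; gain (2 * n) grows like n^Theta(log n). *)
definition gain :: "nat \<Rightarrow> real" where
  "gain l = exp (((ln (real l))^2 - (ln 8)^2) / 16)"

lemma ln_4_ln_8: "ln (4::real) = 2 * ln 2" "ln (8::real) = 3 * ln 2"
  using ln_realpow[of 2 2] ln_realpow[of 2 3] by simp_all

lemma gain_pos: "0 < gain l"
  by (simp add: gain_def)

lemma gain_le_one: "l < 8 \<Longrightarrow> gain l \<le> 1"
  by (cases "l = 0") (auto simp: gain_def intro!: power_mono)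

lemma gain_step:
  assumes "8 \<le> l" "l \<le> 4 * g" "l \<le> 2 * m"
  shows "gain l \<le> sqrt (real m) * gain g"
proof -
  define a b c where "a = ln (real l)" and "b = ln (real g)" and "c = ln (real m)"
  have g: "2 \<le> real g" and m: "4 \<le> real m" using assms by simp_all
  have ln2: "0 < ln (2::real)" "ln (2::real) < 1" using ln_2_less_1 by auto
  have "ln 8 \<le> a" "a \<le> ln (4 * real g)" "a \<le> ln (2 * real m)"
    using assms unfolding a_def by (simp_all add: ln_le_cancel_iff)
  then have a_ge: "3 * ln 2 \<le> a" and a_le_b: "a \<le> 2 * ln 2 + b" and a_le_c: "a \<le> ln 2 + c"
    using g m ln_4_ln_8 by (simp_all add: b_def c_def ln_mult)
  have "0 \<le> b" "0 \<le> c" using g m by (simp_all add: b_def c_def)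
  have "0 \<le> a" using a_ge ln2 by linarith
  have ln_sq: "a^2 - b^2 \<le> 8 * c"
  proof (cases "a \<le> b")
    case True
    then have "a^2 \<le> b^2" using \<open>0 \<le> a\<close> by (intro power_mono)
    then show ?thesis using \<open>0 \<le> c\<close> by simp
  next
    case False
    have "a^2 - b^2 = (a - b) * (a + b)" by (simp add: power2_eq_square algebra_simps)
    also have "\<dots> \<le> (2 * ln 2) * (2 * a)"
      using False a_le_b \<open>0 \<le> b\<close> by (intro mult_mono) auto
    also have "\<dots> \<le> 4 * a" using ln2 \<open>0 \<le> a\<close> by (simp add: mult_left_le_one_le)
    finally show ?thesis using a_ge a_le_c ln2 by linarith
  qed
  have "gain l \<le> exp (c / 2 + ((ln (real g))^2 - (ln 8)^2) / 16)"
    using ln_sq unfolding gain_def a_def b_def exp_le_cancel_iff by (simp add: field_simps)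
  also have "\<dots> = exp (c / 2) * gain g"
    by (simp add: gain_def exp_add)
  also have "exp (c / 2) = real m powr (1 / 2)"
    using m by (simp add: c_def powr_def)
  also have "\<dots> = sqrt (real m)"
    by (simp add: powr_half_sqrt)
  finally show ?thesis .
qed

lemma gain_exponent_ineq:
  fixes y :: real
  assumes "100 \<le> y"
  shows "y^2 / 32 + (ln 4 + 2 * y) \<le> ((ln 2 + y)^2 - (ln 8)^2) / 16"
proof -
  have "y^2 \<le> (ln 2 + y)^2"
    using assms by (intro power_mono) auto
  moreover have "100 * y \<le> y^2"
    using assms by (simp add: power2_eq_square)
  moreover have "(ln (8::real))^2 \<le> 9"
  proof -
    have "ln (8::real) \<le> 3" "0 \<le> ln (8::real)"
      using ln_4_ln_8 ln_2_less_1 by simp_all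
    then have "(ln (8::real))^2 \<le> 3^2" by (rule power_mono)
    then show ?thesis by simp
  qed
  moreover have "ln (4::real) \<le> 2"
    using ln_4_ln_8 ln_2_less_1 by simp
  ultimately show ?thesis using assms by argo
qed

lemma gain_eventually_ge:
  "eventually (\<lambda>n. real n powr (ln (real n) / 32) * (4 * real n ^ 2) \<le> gain (2 * n)) sequentially"
proof -
  have "eventually (\<lambda>y::real. y^2 / 32 + (ln 4 + 2 * y) \<le> ((ln 2 + y)^2 - (ln 8)^2) / 16) at_top"
    using eventually_ge_at_top[of "100::real"] by (rule eventually_mono) (rule gain_exponent_ineq)
  moreover have "filterlim (\<lambda>n. ln (real n)) at_top sequentially"
    by (rule filterlim_compose[OF ln_at_top filterlim_real_sequentially])
  ultimately have "eventually (\<lambda>n. ln (real n)^2 / 32 + (ln 4 + 2 * ln (real n))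
                     \<le> ((ln 2 + ln (real n))^2 - (ln 8)^2) / 16) sequentially"
    by (rule eventually_compose_filterlim)
  then show ?thesis
    using eventually_gt_at_top[of 0]
  proof eventually_elim
    case (elim n)
    have "real n powr (ln (real n) / 32) = exp (ln (real n)^2 / 32)"
      using elim(2) by (simp add: powr_def power2_eq_square)
    moreover have "4 * real n ^ 2 = exp (ln 4 + 2 * ln (real n))"
      using elim(2) by (simp add: exp_add exp_double)
    ultimately have "real n powr (ln (real n) / 32) * (4 * real n ^ 2)
          = exp (ln (real n)^2 / 32 + (ln 4 + 2 * ln (real n)))"
      by (simp add: exp_add)
    also have "\<dots> \<le> gain (2 * n)"
      using elim by (simp add: gain_def ln_mult)
    finally show ?case .
  qed
qed

lemma card_factor_class_gain_le:
  assumes A: "A \<subseteq> slice g a" and pg: "p + g \<le> l"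
    and l: "8 \<le> l" "l \<le> 4 * g" "2 * g \<le> l"
    and IH: "real (card A) * gain g \<le> real N * 2^g"
  shows "real (card {w \<in> slice l k. take g (drop p w) \<in> A}) * gain l \<le> real N * 2^l"
proof -
  define m where "m = l - g"
  define B where "B = m choose (k - a)"
  have "card {w \<in> slice l k. take g (drop p w) \<in> A} \<le> card A * B"
    unfolding m_def B_def using card_slice_factor_le[OF A pg] .
  then have "real (card {w \<in> slice l k. take g (drop p w) \<in> A}) \<le> real (card A * B)"
    by (rule of_nat_mono)
  moreover have "gain l \<le> sqrt (real m) * gain g"
    using l by (intro gain_step) (simp_all add: m_def)
  ultimately have "real (card {w \<in> slice l k. take g (drop p w) \<in> A}) * gain l
      \<le> real (card A * B) * (sqrt (real m) * gain g)"
    by (intro mult_mono) (simp_all add: gain_pos less_imp_le)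
  also have "\<dots> = (real (card A) * gain g) * (real B * sqrt (real m))"
    by (simp add: algebra_simps)
  also have "\<dots> \<le> (real N * 2^g) * 2^m"
    unfolding B_def
    by (rule mult_mono[OF IH binomial_sqrt_le]) (simp_all add: gain_pos less_imp_le)
  also have "\<dots> = real N * 2^l"
    using pg by (simp add: m_def mult.assoc flip: power_add)
  finally show ?thesis .
qed

lemma lang_subset_slice_if_in_context:
  assumes "in_context G r" and "lang r \<subseteq> slice l k" and "homogeneous G"
  shows "\<exists>j. lang G \<subseteq> slice (rlen G) j"
proof -
  obtain x y where "\<forall>v\<in>lang G. x @ v @ y \<in> lang r"
    using assms(1) unfolding in_context_def by blast
  then have "lang G \<subseteq> slice (rlen G) (k - ones x - ones y)"
    using assms(2,3) by (force simp: slice_def length_lang_homogeneous)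
  then show ?thesis by blast
qed

lemma card_gain_le_short:
  assumes "L \<subseteq> slice l k" "l < 8"
  shows "real (card L) * gain l \<le> 2^l"
proof -
  have "card L \<le> 2^l"
    using card_mono[OF finite_slice assms(1)] binomial_le_pow2[of l k] by (simp add: card_slice)
  then have "real (card L) * gain l \<le> 2^l * 1"
    using gain_le_one[OF assms(2)] gain_pos[of l] by (intro mult_mono) (simp_all flip: of_nat_le_iff)
  then show ?thesis by simp
qed

lemma piece_gain_le:
  assumes r: "homogeneous r" "lang r \<subseteq> slice (rlen r) k" "8 \<le> rlen r"
    and Gp: "(G, p) \<in> set (pieces (rlen r div 2) r)"
    and IH: "\<And>k'. lang G \<subseteq> slice (rlen G) k' \<Longrightarrow>
               real (card (lang G)) * gain (rlen G) \<le> real (rnodes G) * 2 ^ rlen G"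
  shows "real (card {w \<in> slice (rlen r) k. take (rlen G) (drop p w) \<in> lang G}) * gain (rlen r)
           \<le> real (rnodes G) * 2 ^ rlen r"
proof -
  have G: "homogeneous G" "p + rlen G \<le> rlen r"
    using pieces_homogeneous[OF Gp r(1)] by simp_all
  obtain j where sG: "lang G \<subseteq> slice (rlen G) j"
    using lang_subset_slice_if_in_context[OF pieces_in_context[OF Gp] r(2) G(1)] by blast
  have "rlen G \<le> rlen r div 2" "rlen r div 2 < 2 * rlen G"
    using pieces_rlen_le[OF Gp] pieces_rlen_gt[OF Gp r(1)] r(3) by simp_all
  then show ?thesis
    using card_factor_class_gain_le[OF sG G(2) r(3) _ _ IH[OF sG]] by simp
qed

theorem card_lang_gain_le:
  "homogeneous r \<Longrightarrow> lang r \<subseteq> slice (rlen r) k \<Longrightarrow>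
   real (card (lang r)) * gain (rlen r) \<le> real (rnodes r) * 2 ^ rlen r"
proof (induction "rlen r" arbitrary: r k rule: less_induct)
  case less
  show ?case
  proof (cases "rlen r < 8")
    case True
    have "1 \<le> rnodes r" by (cases r) auto
    then have "2 ^ rlen r \<le> real (rnodes r) * 2 ^ rlen r" by simp
    then show ?thesis using card_gain_le_short[OF less.prems(2) True] by linarith
  next
    case False
    define t where "t = rlen r div 2"
    define factor_class where
      "factor_class x = {w \<in> slice (rlen r) k. take (rlen (fst x)) (drop (snd x) w) \<in> lang (fst x)}"
      for x
    have "real (card (lang r)) * gain (rlen r)
          \<le> real (\<Sum>x\<leftarrow>pieces t r. rnodes (fst x)) * 2 ^ rlen r"
    proof (rule weighted_union_bound)
      show "lang r \<subseteq> (\<Union>x\<in>set (pieces t r). factor_class x)"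
        using pieces_cover[OF less.prems(1)] less.prems(2) by (fastforce simp: factor_class_def)
      show "finite (factor_class x)" for x
        unfolding factor_class_def by simp
      show "real (card (factor_class x)) * gain (rlen r) \<le> real (rnodes (fst x)) * 2 ^ rlen r"
        if "x \<in> set (pieces t r)" for x
      proof -
        obtain G p where x: "x = (G, p)" by fastforce
        with that have Gp: "(G, p) \<in> set (pieces t r)" by simp
        have "homogeneous G" "rlen G < rlen r"
          using pieces_homogeneous[OF Gp less.prems(1)] pieces_rlen_le[OF Gp] False
          by (simp_all add: t_def)
        then show ?thesis
          using piece_gain_le[OF less.prems _ Gp[unfolded t_def]] less.hyps False
          by (simp add: x factor_class_def)
      qed
    qed (simp add: gain_pos less_imp_le)
    also have "\<dots> \<le> real (rnodes r) * 2 ^ rlen r"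
      using sum_rnodes_pieces_le[of t r] by simp
    finally show ?thesis .
  qed
qed

fun word_rexp :: "bool list \<Rightarrow> rexp" where
  "word_rexp [] = Eps"
| "word_rexp (a # w) = Cat (Sym a) (word_rexp w)"

lemma lang_word_rexp: "lang (word_rexp w) = {w}"
  by (induction w) auto

lemma finite_lang_rexp: "finite L \<Longrightarrow> L \<noteq> {} \<Longrightarrow> \<exists>r. lang r = L"
proof (induction L rule: finite_ne_induct)
  case (singleton w)
  then show ?case using lang_word_rexp by blast
next
  case (insert w L)
  then obtain r where "lang r = L" by blast
  then have "lang (Alt (word_rexp w) r) = insert w L" by (simp add: lang_word_rexp)
  then show ?case by blast
qed

lemma rpn_attained:
  assumes "finite L" "L \<noteq> {}"
  obtains r where "lang r = L" "rnodes r = rpn L"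
proof -
  obtain r where "lang r = L" using finite_lang_rexp[OF assms] by blast
  then have "\<exists>k r. lang r = L \<and> rnodes r = k" by blast
  then have "\<exists>r. lang r = L \<and> rnodes r = rpn L"
    unfolding rpn_def by (rule LeastI_ex)
  with that show ?thesis by blast
qed

theorem rpn_slice_subset_ge:
  assumes "L \<subseteq> slice m k" "L \<noteq> {}"
  shows "real (card L) * gain m \<le> real (rpn L) * 2^m"
proof -
  obtain r where r: "lang r = L" "rnodes r = rpn L"
    using rpn_attained[OF finite_subset[OF assms(1) finite_slice] assms(2)] .
  have "\<forall>w\<in>lang r. length w = m" using r(1) assms(1) by (auto simp: slice_def)
  then have "homogeneous r" "rlen r = m" using homogeneous_if_lengths_eq by blast+
  then show ?thesis using card_lang_gain_le[of r k] r assms(1) by simp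
qed

section \<open>Dyck words\<close>

lemma dyck_ones: "w \<in> dyck \<Longrightarrow> 2 * ones w = length w"
  by (induction rule: dyck.induct) auto

lemma dyck_len_subset_slice: "dyck_len (2 * n) \<subseteq> slice (2 * n) n"
  using dyck_ones by (fastforce simp: dyck_len_def slice_def)

lemma dyck_insert_pair: "u @ v \<in> dyck \<Longrightarrow> u @ [False, True] @ v \<in> dyck"
proof (induction "u @ v" arbitrary: u v rule: dyck.induct)
  case eps
  then show ?case using dyck.wrap[OF dyck.eps] by simp
next
  case (conc x y)
  from conc.hyps(5) obtain us where "x = u @ us \<and> v = us @ y \<or> x @ us = u \<and> y = us @ v"
    by (auto simp: append_eq_append_conv2)
  then show ?case
    using conc.hyps dyck.conc by (metis append.assoc)
next
  case (wrap x)
  have pair: "[False, True] \<in> dyck" using dyck.wrap[OF dyck.eps] by simp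
  consider "u = []" | "v = []" | u' v' where "u = False # u'" "v = v' @ [True]" "x = u' @ v'"
    using wrap.hyps(3) by (cases u; cases v rule: rev_exhaust) auto
  then show ?case
  proof cases
    case 1
    then show ?thesis using dyck.conc[OF pair dyck.wrap[OF wrap.hyps(1)]] wrap.hyps(3) by simp
  next
    case 2
    then have "u = [False] @ x @ [True]" using wrap.hyps(3) by simp
    then show ?thesis using dyck.conc[OF dyck.wrap[OF wrap.hyps(1)] pair] 2 by simp
  next
    case 3
    then show ?thesis using dyck.wrap[OF wrap.hyps(2)[OF 3(3)]] by simp
  qed
qed

definition height :: "bool list \<Rightarrow> int" where
  "height w = int (length w) - 2 * int (ones w)"

lemma height_simps [simp]:
  "height [] = 0" "height (u @ v) = height u + height v"
  "height (False # w) = height w + 1" "height (True # w) = height w - 1"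
  by (auto simp: height_def)

definition dyck_path :: "bool list \<Rightarrow> bool" where
  "dyck_path w \<longleftrightarrow> height w = 0 \<and> (\<forall>u v. w = u @ v \<longrightarrow> 0 \<le> height u)"

lemma dyck_path_remove_pair:
  assumes "dyck_path (a @ [False, True] @ z)"
  shows "dyck_path (a @ z)"
  unfolding dyck_path_def
proof (intro conjI allI impI)
  show "height (a @ z) = 0" using assms by (simp add: dyck_path_def)
next
  fix u v assume "a @ z = u @ v"
  then obtain us where "a = u @ us \<and> v = us @ z \<or> a @ us = u \<and> z = us @ v"
    by (auto simp: append_eq_append_conv2)
  then show "0 \<le> height u"
  proof
    assume "a = u @ us \<and> v = us @ z"
    then have "a @ [False, True] @ z = u @ (us @ [False, True] @ z)" by simp
    then show ?thesis using assms by (simp add: dyck_path_def)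
  next
    assume u: "a @ us = u \<and> z = us @ v"
    then have "a @ [False, True] @ z = (a @ [False, True] @ us) @ v" by simp
    then show ?thesis using assms u
      by (auto simp: dyck_path_def dest: spec[of _ "a @ [False, True] @ us"])
  qed
qed

lemma dyck_path_imp_dyck: "dyck_path w \<Longrightarrow> w \<in> dyck"
proof (induction "length w" arbitrary: w rule: less_induct)
  case less
  show ?case
  proof (cases "True \<in> set w")
    case False
    then have "w = []"
      using less.prems by (auto simp: dyck_path_def height_def count_list_0_iff)
    then show ?thesis by (simp add: dyck.eps)
  next
    case True
    then obtain ys z where w: "w = ys @ True # z" and "True \<notin> set ys"
      using split_list_first by metis
    moreover have "ys \<noteq> []"
      using less.prems w by (auto simp: dyck_path_def dest: spec[of _ "[True]"])
    ultimately obtain a where a: "w = a @ [False, True] @ z"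
      by (cases ys rule: rev_exhaust) auto
    then have "dyck_path (a @ [False, True] @ z)" using less.prems by simp
    then have "dyck_path (a @ z)" by (rule dyck_path_remove_pair)
    moreover have "length (a @ z) < length w" using a by simp
    ultimately have "a @ z \<in> dyck" using less.hyps by blast
    then show ?thesis using a dyck_insert_pair by simp
  qed
qed

lemma ex_min_height_prefix: "\<exists>x y. w = x @ y \<and> (\<forall>u v. w = u @ v \<longrightarrow> height x \<le> height u)"
proof -
  have "{u. \<exists>v. w = u @ v} \<subseteq> (\<lambda>i. take i w) ` {..length w}"
  proof
    fix u assume "u \<in> {u. \<exists>v. w = u @ v}"
    then show "u \<in> (\<lambda>i. take i w) ` {..length w}" by (force intro: image_eqI[of _ _ "length u"])
  qed
  then have "finite {u. \<exists>v. w = u @ v}" by (rule finite_subset) simp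
  then obtain x where "is_arg_min height (\<lambda>u. u \<in> {u. \<exists>v. w = u @ v}) x"
    using ex_is_arg_min_if_finite[of "{u. \<exists>v. w = u @ v}" height] by blast
  then have "\<exists>y. w = x @ y" "\<forall>u v. w = u @ v \<longrightarrow> height x \<le> height u"
    unfolding is_arg_min_def by (auto simp: not_less)
  then show ?thesis by blast
qed

lemma dyck_path_rotate_min_prefix:
  assumes "height (x @ y) = 0" and min: "\<And>u v. x @ y = u @ v \<Longrightarrow> height x \<le> height u"
  shows "dyck_path (y @ x)"
  unfolding dyck_path_def
proof (intro conjI allI impI)
  show "height (y @ x) = 0" using assms(1) by simp
next
  fix u v assume "y @ x = u @ v"
  then obtain us where "y = u @ us \<and> v = us @ x \<or> y @ us = u \<and> x = us @ v"
    by (auto simp: append_eq_append_conv2)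
  then show "0 \<le> height u"
  proof
    assume "y = u @ us \<and> v = us @ x"
    then show ?thesis using min[of "x @ u" us] by simp
  next
    assume "y @ us = u \<and> x = us @ v"
    then show ?thesis using min[of us "v @ y"] assms(1) by auto
  qed
qed

lemma cycle_lemma:
  assumes w: "w \<in> slice (2 * n) n" and n: "0 < n"
  shows "\<exists>k<2 * n. \<exists>d\<in>dyck_len (2 * n). w = rotate k d"
proof -
  obtain x y where xy: "w = x @ y" and min: "\<forall>u v. w = u @ v \<longrightarrow> height x \<le> height u"
    using ex_min_height_prefix by blast
  have "height w = 0" "length (y @ x) = 2 * n"
    using w xy by (simp_all add: slice_def height_def)
  then have "dyck_path (y @ x)"
    using xy min by (intro dyck_path_rotate_min_prefix) auto
  then have d: "y @ x \<in> dyck_len (2 * n)"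
    using dyck_path_imp_dyck \<open>length (y @ x) = 2 * n\<close> by (simp add: dyck_len_def)
  have "w = rotate (length y mod (2 * n)) (y @ x)"
    using xy \<open>length (y @ x) = 2 * n\<close> by (metis rotate_conv_mod rotate_append)
  moreover have "length y mod (2 * n) < 2 * n" using n by simp
  ultimately show ?thesis using d by blast
qed

lemma central_binomial_le_card_dyck:
  assumes "0 < n"
  shows "(2 * n) choose n \<le> 2 * n * card (dyck_len (2 * n))"
proof -
  have fin: "finite (dyck_len (2 * n))"
    using dyck_len_subset_slice finite_slice finite_subset by blast
  have "slice (2 * n) n \<subseteq> (\<Union>k<2 * n. rotate k ` dyck_len (2 * n))"
    using cycle_lemma[OF _ assms] by blast
  then have "card (slice (2 * n) n) \<le> card (\<Union>k<2 * n. rotate k ` dyck_len (2 * n))"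
    using fin by (intro card_mono) auto
  also have "\<dots> \<le> (\<Sum>k<2 * n. card (rotate k ` dyck_len (2 * n)))"
    by (rule card_UN_le) simp
  also have "\<dots> \<le> (\<Sum>k<2 * n. card (dyck_len (2 * n)))"
    by (intro sum_mono card_image_le fin)
  finally show ?thesis by (simp add: card_slice)
qed

lemma card_dyck_len_ge:
  assumes "0 < n"
  shows "4^n / (4 * real n ^ 2) \<le> real (card (dyck_len (2 * n)))"
proof -
  have "4^n / (2 * real n) \<le> real ((2 * n) choose n)"
    by (rule central_binomial_lower_bound[OF assms])
  also have "\<dots> \<le> real (2 * n * card (dyck_len (2 * n)))"
    by (rule of_nat_mono[OF central_binomial_le_card_dyck[OF assms]])
  finally show ?thesis
    using assms by (simp add: power2_eq_square field_simps)
qed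

lemma rpn_dyck_len_ge:
  assumes "0 < n"
  shows "gain (2 * n) / (4 * real n ^ 2) \<le> real (rpn (dyck_len (2 * n)))"
proof -
  let ?D = "dyck_len (2 * n)"
  have "0 < 4^n / (4 * real n ^ 2)" using assms by simp
  then have "?D \<noteq> {}" using card_dyck_len_ge[OF assms] by auto
  then have rpn: "real (card ?D) * gain (2 * n) \<le> real (rpn ?D) * 4^n"
    using rpn_slice_subset_ge[OF dyck_len_subset_slice] by (simp add: power_mult)
  have "gain (2 * n) / (4 * real n ^ 2) = 4^n / (4 * real n ^ 2) * gain (2 * n) / 4^n"
    by simp
  also have "\<dots> \<le> real (card ?D) * gain (2 * n) / 4^n"
    using card_dyck_len_ge[OF assms]
    by (intro divide_right_mono mult_right_mono) (simp_all add: gain_pos less_imp_le)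
  also have "\<dots> \<le> real (rpn ?D)"
    using rpn by (simp add: pos_divide_le_eq)
  finally show ?thesis .
qed

theorem corollary5p4:
  shows "\<exists>c>0. \<exists>N. \<forall>n\<ge>N.
           real (rpn (dyck_len (2 * n))) \<ge> real n powr (c * ln (real n))"
proof -
  have "eventually (\<lambda>n. real n powr (1 / 32 * ln (real n)) \<le> real (rpn (dyck_len (2 * n)))) sequentially"
    using gain_eventually_ge eventually_gt_at_top[of 0]
  proof eventually_elim
    case (elim n)
    then have "real n powr (1 / 32 * ln (real n)) \<le> gain (2 * n) / (4 * real n ^ 2)"
      by (simp add: field_simps)
    then show ?case using rpn_dyck_len_ge[OF elim(2)] by linarith
  qed
  then show ?thesis unfolding eventually_sequentially
    by (intro exI[of _ "1 / 32"]) auto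
qed

end
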